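(* Let $\mathsf{S}$ be the $2D\times 2D$ stability matrix of the RPA equation $\mathsf{S}\,\mathbf{x}_\nu=\omega_\nu\mathsf{N}\,\mathbf{x}_\nu$ with norm matrix $\mathsf{N}=\begin{pmatrix} 1&0\\ 0&-1 \end{pmatrix}$, where $\mathsf{S}=\mathsf{S}^\dagger$ and $\mathsf{\Sigma}_x\,\mathsf{S}^\ast\,\mathsf{\Sigma}_x = \mathsf{S}$ with $\mathsf{\Sigma}_x = \begin{pmatrix} 0&1\\1&0 \end{pmatrix}$. If $\mathsf{S}$ is positive-semidefinite, then every solution of the RPA equation is either a physical solution (a real nonzero eigenvalue, appearing in a pair $\pm\omega_\nu$, whose eigenvector is normalizable, i.e. has nonzero norm $\mathbf{x}_\nu^\dagger\mathsf{N}\,\mathbf{x}_\nu$, positive for $\omega_\nu>0$) or a Nambu-Goldstone (NG) mode solution (eigenvalue $\omega_\nu=0$, i.e. $\mathsf{S}\,\mathbf{x}_\nu=\mathbf{0}$); and the dimension of any Jordan block of $\mathsf{N\,S}$ associated with an NG-mode solution does not exceed two.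
   Context: The RPA equation is read as the eigenvalue problem of $\mathsf{N\,S}$. The classification into physical solutions and NG-mode solutions corresponds to Classes (1) and (5), respectively, of the five-class classification of RPA solutions in H. Nakada, PTEP (2016) (Prop. 2 there), based on the so-called UL- and LR-dualities. A Jordan block of $\mathsf{N\,S}$ at eigenvalue $0$ built on $\boldsymbol{\xi}_1=\mathbf{x}_\nu$ satisfies $\mathsf{S}\,\boldsymbol{\xi}_2 = i c_1\,\mathsf{N}\,\mathbf{x}_\nu$ with $c_1\in\mathbf{C}$, $c_1\neq 0$. *)

theory Defs
  imports "Jordan_Normal_Form.Jordan_Normal_Form"
begin

text \<open>Matrices are 2D x 2D complex matrices (Jordan_Normal_Form 'mat'), indices
  0..D-1 form the upper block (X amplitudes), D..2D-1 the lower block (Y amplitudes).\<close>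

definition normM :: "nat \<Rightarrow> complex mat" where
  "normM D = mat (2*D) (2*D) (\<lambda>(i,j). if i = j then (if i < D then 1 else -1) else 0)"

definition sigmaX :: "nat \<Rightarrow> complex mat" where
  "sigmaX D = mat (2*D) (2*D)
     (\<lambda>(i,j). if j = (if i < D then i + D else i - D) then 1 else 0)"

definition cnj_mat :: "complex mat \<Rightarrow> complex mat" where
  "cnj_mat A = map_mat cnj A"

definition dagger :: "complex mat \<Rightarrow> complex mat" where
  "dagger A = transpose_mat (cnj_mat A)"

definition cnj_vec :: "complex vec \<Rightarrow> complex vec" where
  "cnj_vec v = map_vec cnj v"

definition qform :: "complex mat \<Rightarrow> complex vec \<Rightarrow> complex" where
  "qform A x = cnj_vec x \<bullet> (A *\<^sub>v x)"

definition psd_mat :: "nat \<Rightarrow> complex mat \<Rightarrow> bool" where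
  "psd_mat n A \<longleftrightarrow> (\<forall>x \<in> carrier_vec n. Im (qform A x) = 0 \<and> Re (qform A x) \<ge> 0)"

definition rpa_solution :: "nat \<Rightarrow> complex mat \<Rightarrow> complex \<Rightarrow> complex vec \<Rightarrow> bool" where
  "rpa_solution D S \<omega> x \<longleftrightarrow> x \<in> carrier_vec (2*D) \<and> x \<noteq> 0\<^sub>v (2*D) \<and>
     S *\<^sub>v x = \<omega> \<cdot>\<^sub>v (normM D *\<^sub>v x)"

end

theory Submission
  imports Defs "Jordan_Normal_Form.Jordan_Normal_Form_Uniqueness"
begin

text \<open>Since \<open>S\<close> is Hermitian and positive-semidefinite, \<open>x\<^sup>\<dagger> S x = 0\<close> forces \<open>S x = 0\<close>.
  Multiplying the RPA equation by \<open>x\<^sup>\<dagger>\<close> gives \<open>x\<^sup>\<dagger> S x = \<omega> x\<^sup>\<dagger> N x\<close>. If the left side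
  vanishes, \<open>S x = 0\<close> and then \<open>\<omega> = 0\<close> because \<open>N x \<noteq> 0\<close>. Otherwise it is positive, so
  \<open>\<omega> = x\<^sup>\<dagger> S x / x\<^sup>\<dagger> N x\<close> is real and nonzero and has the sign of the norm; the symmetry
  \<open>\<Sigma>\<^sub>x S\<^sup>* \<Sigma>\<^sub>x = S\<close> turns \<open>x\<close> into the partner solution \<open>\<Sigma>\<^sub>x x\<^sup>*\<close> with eigenvalue \<open>-\<omega>\<close>.

  For the Jordan blocks it suffices that the kernels of \<open>(N S)\<^sup>2\<close> and \<open>(N S)\<^sup>3\<close> agree. If
  \<open>(N S)\<^sup>3 v = 0\<close>, put \<open>x\<^sub>2 = N S v\<close> and \<open>x\<^sub>1 = N S x\<^sub>2\<close>; then \<open>S x\<^sub>1 = 0\<close>, \<open>S x\<^sub>2 = N x\<^sub>1\<close> and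
  \<open>N x\<^sub>2 = S v\<close>, so \<open>x\<^sub>2\<^sup>\<dagger> S x\<^sub>2 = (S v)\<^sup>\<dagger> x\<^sub>1 = v\<^sup>\<dagger> S x\<^sub>1 = 0\<close>. Hence \<open>S x\<^sub>2 = 0\<close>, i.e. \<open>x\<^sub>1 = 0\<close>.\<close>

lemma mult_mat_vec_zero_vec[simp]: "dim_col A = m \<Longrightarrow> A *\<^sub>v 0\<^sub>v m = 0\<^sub>v (dim_row A)"
  by (intro eq_vecI) auto

lemma smult_vec_zero_vec[simp]: "c \<cdot>\<^sub>v 0\<^sub>v n = (0\<^sub>v n :: 'a :: mult_zero vec)"
  by (intro eq_vecI) auto

lemma pow_mat_Suc_left:
  assumes "A \<in> carrier_mat n n"
  shows "A ^\<^sub>m Suc k = A * A ^\<^sub>m k"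
proof (induction k)
  case (Suc k)
  have "A ^\<^sub>m Suc (Suc k) = A ^\<^sub>m Suc k * A" by (rule pow_mat.simps(2))
  also have "\<dots> = (A * A ^\<^sub>m k) * A" by (subst Suc.IH) (rule refl)
  also have "\<dots> = A * A ^\<^sub>m Suc k" using assms by (simp add: assoc_mult_mat[of _ n n _ n _ n])
  finally show ?case .
qed (use assms in simp)

lemma pow_mat_Suc_mult_vec:
  assumes "A \<in> carrier_mat n n" "v \<in> carrier_vec n"
  shows "(A ^\<^sub>m Suc k) *\<^sub>v v = A *\<^sub>v ((A ^\<^sub>m k) *\<^sub>v v)"
  using assms by (simp add: pow_mat_Suc_left[OF assms(1)] assoc_mult_mat_vec[of _ n n _ n]
      del: pow_mat.simps(2))

lemma sum_list_min_Suc_eq_imp_le: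
  assumes "(\<Sum>m\<leftarrow>xs. min (Suc k) m) = (\<Sum>m\<leftarrow>xs. min k m)"
  shows "\<forall>m\<in>set xs. m \<le> k"
  using assms
proof (induction xs)
  case (Cons a xs)
  have "(\<Sum>m\<leftarrow>xs. min k m) \<le> (\<Sum>m\<leftarrow>xs. min (Suc k) m)"
    by (rule sum_list_mono) simp
  moreover have "min k a \<le> min (Suc k) a" by simp
  ultimately have "min (Suc k) a = min k a"
    and "(\<Sum>m\<leftarrow>xs. min (Suc k) m) = (\<Sum>m\<leftarrow>xs. min k m)"
    using Cons.prems by auto
  with Cons.IH show ?case by auto
qed simp

lemma jordan_nf_block_size_le_if_kernel_stable:
  fixes A :: "'a :: field mat"
  assumes A: "A \<in> carrier_mat n n"
    and jnf: "jordan_nf A n_as"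
    and stable: "mat_kernel (char_matrix A a ^\<^sub>m Suc k) \<subseteq> mat_kernel (char_matrix A a ^\<^sub>m k)"
  shows "\<forall>(m, b) \<in> set n_as. b = a \<longrightarrow> m \<le> k"
proof -
  have C: "char_matrix A a \<in> carrier_mat n n" using A by simp
  have "mat_kernel (char_matrix A a ^\<^sub>m k) \<subseteq> mat_kernel (char_matrix A a ^\<^sub>m Suc k)"
    using C by (auto simp: mat_kernel_def pow_mat_Suc_mult_vec[OF C] simp del: pow_mat.simps(2))
  with stable have "kernel_dim (char_matrix A a ^\<^sub>m Suc k) = kernel_dim (char_matrix A a ^\<^sub>m k)"
    unfolding kernel_dim_def using C by simp
  hence "(\<Sum>m\<leftarrow>map fst [(m, e)\<leftarrow>n_as . e = a]. min (Suc k) m)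
       = (\<Sum>m\<leftarrow>map fst [(m, e)\<leftarrow>n_as . e = a]. min k m)"
    using dim_gen_eigenspace[OF jnf] unfolding dim_gen_eigenspace_def by metis
  from sum_list_min_Suc_eq_imp_le[OF this] show ?thesis by force
qed

lemma cnj_vec_eq_conjugate: "cnj_vec x = conjugate x"
  unfolding cnj_vec_def by (intro eq_vecI) auto

lemma carrier_vec_cnj_vec[simp]: "x \<in> carrier_vec n \<Longrightarrow> cnj_vec x \<in> carrier_vec n"
  by (simp add: cnj_vec_eq_conjugate)

lemma sesquilinear_sum:
  assumes "A \<in> carrier_mat n n" "x \<in> carrier_vec n" "y \<in> carrier_vec n"
  shows "cnj_vec x \<bullet> (A *\<^sub>v y) = (\<Sum>i\<in>{0..<n}. \<Sum>j\<in>{0..<n}. cnj (x$i) * A$$(i,j) * y$j)"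
  using assms unfolding cnj_vec_def
  by (auto simp: scalar_prod_def row_def sum_distrib_left mult.assoc intro!: sum.cong)

lemma hermitian_sesquilinear_swap:
  assumes A: "A \<in> carrier_mat n n" "dagger A = A"
    and x: "x \<in> carrier_vec n" and y: "y \<in> carrier_vec n"
  shows "cnj_vec x \<bullet> (A *\<^sub>v y) = cnj (cnj_vec y \<bullet> (A *\<^sub>v x))"
proof -
  have entry: "cnj (A $$ (i,j)) = A $$ (j,i)" if "i < n" "j < n" for i j
  proof -
    have "dagger A $$ (j,i) = cnj (A $$ (i,j))"
      using that A(1) unfolding dagger_def cnj_mat_def by auto
    then show ?thesis using A(2) by simp
  qed
  have "cnj (cnj_vec y \<bullet> (A *\<^sub>v x)) = (\<Sum>i\<in>{0..<n}. \<Sum>j\<in>{0..<n}. y$i * A$$(j,i) * cnj (x$j))"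
    unfolding sesquilinear_sum[OF A(1) y x] cnj_sum by (intro sum.cong refl) (simp add: entry)
  also have "\<dots> = cnj_vec x \<bullet> (A *\<^sub>v y)"
    unfolding sesquilinear_sum[OF A(1) x y] by (subst sum.swap) (simp add: mult_ac)
  finally show ?thesis by simp
qed

lemma qform_add_smult:
  assumes A: "A \<in> carrier_mat n n" and x: "x \<in> carrier_vec n" and y: "y \<in> carrier_vec n"
  shows "qform A (x + c \<cdot>\<^sub>v y) = qform A x + c * (cnj_vec x \<bullet> (A *\<^sub>v y))
     + cnj c * (cnj_vec y \<bullet> (A *\<^sub>v x)) + cnj c * c * qform A y"
proof -
  have z: "x + c \<cdot>\<^sub>v y \<in> carrier_vec n" using x y by auto
  have "qform A (x + c \<cdot>\<^sub>v y) = (\<Sum>i\<in>{0..<n}. \<Sum>j\<in>{0..<n}.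
      cnj (x$i) * A$$(i,j) * x$j + c * (cnj (x$i) * A$$(i,j) * y$j)
      + cnj c * (cnj (y$i) * A$$(i,j) * x$j) + cnj c * c * (cnj (y$i) * A$$(i,j) * y$j))"
    unfolding qform_def sesquilinear_sum[OF A z z] using x y
    by (intro sum.cong refl) (simp add: ring_distribs mult.assoc mult.left_commute)
  then show ?thesis
    unfolding qform_def sesquilinear_sum[OF A x y] sesquilinear_sum[OF A y x]
      sesquilinear_sum[OF A x x] sesquilinear_sum[OF A y y]
    by (simp only: sum.distrib sum_distrib_left mult.assoc)
qed

lemma psd_mat_qform_real_nonneg:
  assumes "psd_mat n A" "x \<in> carrier_vec n"
  shows "qform A x = complex_of_real (Re (qform A x))" "Re (qform A x) \<ge> 0"
  using assms unfolding psd_mat_def by (auto simp: complex_eq_iff)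

lemma real_quadratic_nonneg_imp_linear_coeff_zero:
  fixes r s :: real
  assumes "r \<ge> 0" "s \<ge> 0" and "\<forall>t. 2 * t * r + t\<^sup>2 * s \<ge> 0"
  shows "r = 0"
proof -
  define t where "t = - r / (s + 1)"
  have "2 * t * r + t\<^sup>2 * s = - (r\<^sup>2 * (s + 2)) / (s + 1)\<^sup>2"
    using assms(2) unfolding t_def by (simp add: divide_simps power2_eq_square) (simp add: algebra_simps)
  moreover have "(s + 1)\<^sup>2 > 0" using assms(2) by simp
  ultimately have "r\<^sup>2 * (s + 2) \<le> 0"
    using assms(3) by (metis neg_0_le_iff_le zero_le_divide_iff not_le)
  with assms show ?thesis by (simp add: mult_le_0_iff)
qed

lemma psd_qform_eq_0_imp_kernel:
  assumes A: "A \<in> carrier_mat n n" "dagger A = A" and psd: "psd_mat n A"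
    and x: "x \<in> carrier_vec n" and q0: "qform A x = 0"
  shows "A *\<^sub>v x = 0\<^sub>v n"
proof -
  define y where "y = A *\<^sub>v x"
  have y: "y \<in> carrier_vec n" using A x unfolding y_def by auto
  have yy: "cnj_vec y \<bullet> y = y \<bullet>c y"
    using conjugate_vec_sprod_comm[OF y y] by (simp add: cnj_vec_eq_conjugate)
  define r where "r = Re (y \<bullet>c y)"
  have r: "y \<bullet>c y = complex_of_real r" "r \<ge> 0"
    using conjugate_square_ge_0_vec[of y] unfolding r_def by (auto simp: less_eq_complex_def complex_eq_iff)
  have yAx: "cnj_vec y \<bullet> (A *\<^sub>v x) = complex_of_real r" and xAy: "cnj_vec x \<bullet> (A *\<^sub>v y) = complex_of_real r"
    using yy r hermitian_sesquilinear_swap[OF A x y] unfolding y_def[symmetric] by auto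
  define s where "s = Re (qform A y)"
  have s: "qform A y = complex_of_real s" "s \<ge> 0"
    using psd_mat_qform_real_nonneg[OF psd y] unfolding s_def by auto
  have quadratic_nonneg: "\<forall>t. 2 * t * r + t\<^sup>2 * s \<ge> 0"
  proof
    fix t
    have "qform A (x + complex_of_real t \<cdot>\<^sub>v y) = complex_of_real (2 * t * r + t\<^sup>2 * s)"
      unfolding qform_add_smult[OF A(1) x y] q0 yAx xAy s(1) by (simp add: power2_eq_square)
    with psd_mat_qform_real_nonneg(2)[OF psd, of "x + complex_of_real t \<cdot>\<^sub>v y"] x y
    show "2 * t * r + t\<^sup>2 * s \<ge> 0" by simp
  qed
  have "r = 0" by (rule real_quadratic_nonneg_imp_linear_coeff_zero[OF r(2) s(2) quadratic_nonneg])
  with r(1) have "y \<bullet>c y = 0" by simp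
  then show ?thesis using conjugate_square_eq_0_vec[OF y] unfolding y_def by simp
qed

lemma dim_normM[simp]: "dim_row (normM D) = 2*D" "dim_col (normM D) = 2*D"
  unfolding normM_def by auto

lemma normM_carrier[simp]: "normM D \<in> carrier_mat (2*D) (2*D)"
  by auto

lemma row_normM: "i < 2*D \<Longrightarrow> row (normM D) i = (if i < D then 1 else -1) \<cdot>\<^sub>v unit_vec (2*D) i"
  unfolding normM_def unit_vec_def by (rule eq_vecI) auto

lemma normM_mult_vec:
  assumes "x \<in> carrier_vec (2*D)"
  shows "normM D *\<^sub>v x = vec (2*D) (\<lambda>i. if i < D then x$i else - x$i)"
  using assms by (intro eq_vecI) (auto simp: row_normM)

lemma normM_involutive:
  assumes "x \<in> carrier_vec (2*D)"
  shows "normM D *\<^sub>v (normM D *\<^sub>v x) = x"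
  using assms by (intro eq_vecI) (auto simp: normM_mult_vec)

lemma normM_mult_vec_eq_0_iff:
  assumes "x \<in> carrier_vec (2*D)"
  shows "normM D *\<^sub>v x = 0\<^sub>v (2*D) \<longleftrightarrow> x = 0\<^sub>v (2*D)"
  using normM_involutive[OF assms] by auto

lemma normM_hermitian: "dagger (normM D) = normM D"
  unfolding dagger_def cnj_mat_def normM_def by (rule eq_matI) auto

definition swap_half :: "nat \<Rightarrow> nat \<Rightarrow> nat" where
  "swap_half D i = (if i < D then i + D else i - D)"

lemma swap_half_less: "i < 2*D \<Longrightarrow> swap_half D i < 2*D"
  unfolding swap_half_def by auto

lemma swap_half_swap_half: "i < 2*D \<Longrightarrow> swap_half D (swap_half D i) = i"
  unfolding swap_half_def by auto

lemma swap_half_less_half_iff: "i < 2*D \<Longrightarrow> swap_half D i < D \<longleftrightarrow> \<not> i < D"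
  unfolding swap_half_def by auto

lemma sum_swap_half: "(\<Sum>j\<in>{0..<2*D}. f (swap_half D j)) = (\<Sum>j\<in>{0..<2*D}. f j)"
  by (rule sum.reindex_bij_witness[of _ "swap_half D" "swap_half D"])
    (auto simp: swap_half_less swap_half_swap_half)

lemma dim_sigmaX[simp]: "dim_row (sigmaX D) = 2*D" "dim_col (sigmaX D) = 2*D"
  unfolding sigmaX_def by auto

lemma sigmaX_carrier[simp]: "sigmaX D \<in> carrier_mat (2*D) (2*D)"
  by auto

lemma row_sigmaX: "i < 2*D \<Longrightarrow> row (sigmaX D) i = unit_vec (2*D) (swap_half D i)"
  unfolding sigmaX_def swap_half_def unit_vec_def by (rule eq_vecI) auto

lemma col_sigmaX: "j < 2*D \<Longrightarrow> col (sigmaX D) j = unit_vec (2*D) (swap_half D j)"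
  unfolding sigmaX_def swap_half_def unit_vec_def by (rule eq_vecI) auto

lemma sigmaX_mult_left:
  assumes "M \<in> carrier_mat (2*D) m"
  shows "sigmaX D * M = mat (2*D) m (\<lambda>(i,j). M $$ (swap_half D i, j))"
  using assms swap_half_less by (intro eq_matI) (auto simp: row_sigmaX)

lemma sigmaX_mult_right:
  assumes "M \<in> carrier_mat m (2*D)"
  shows "M * sigmaX D = mat m (2*D) (\<lambda>(i,j). M $$ (i, swap_half D j))"
  using assms swap_half_less by (intro eq_matI) (auto simp: col_sigmaX)

lemma sigmaX_mult_vec:
  assumes "x \<in> carrier_vec (2*D)"
  shows "sigmaX D *\<^sub>v x = vec (2*D) (\<lambda>i. x $ swap_half D i)"
  using assms swap_half_less by (intro eq_vecI) (auto simp: row_sigmaX)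

lemma sigmaX_involutive:
  assumes "x \<in> carrier_vec (2*D)"
  shows "sigmaX D *\<^sub>v (sigmaX D *\<^sub>v x) = x"
  using assms swap_half_less swap_half_swap_half by (intro eq_vecI) (auto simp: sigmaX_mult_vec)

lemma particle_hole_symmetric_entry:
  assumes S: "S \<in> carrier_mat (2*D) (2*D)" and sym: "sigmaX D * cnj_mat S * sigmaX D = S"
    and i: "i < 2*D" and j: "j < 2*D"
  shows "S $$ (i,j) = cnj (S $$ (swap_half D i, swap_half D j))"
proof -
  have cS: "cnj_mat S \<in> carrier_mat (2*D) (2*D)" using S unfolding cnj_mat_def by auto
  then have "sigmaX D * cnj_mat S \<in> carrier_mat (2*D) (2*D)" by (metis mult_carrier_mat sigmaX_carrier)
  then have "(sigmaX D * cnj_mat S * sigmaX D) $$ (i,j) = (sigmaX D * cnj_mat S) $$ (i, swap_half D j)"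
    using i j by (simp add: sigmaX_mult_right)
  then have "S $$ (i,j) = (sigmaX D * cnj_mat S) $$ (i, swap_half D j)"
    by (simp only: sym)
  also have "\<dots> = cnj (S $$ (swap_half D i, swap_half D j))"
    unfolding sigmaX_mult_left[OF cS] using S i j swap_half_less by (simp add: cnj_mat_def)
  finally show ?thesis .
qed

lemma rpa_solution_particle_hole_partner:
  assumes S: "S \<in> carrier_mat (2*D) (2*D)" and sym: "sigmaX D * cnj_mat S * sigmaX D = S"
    and sol: "rpa_solution D S \<omega> x"
  shows "rpa_solution D S (- cnj \<omega>) (sigmaX D *\<^sub>v cnj_vec x)"
proof -
  from sol have x: "x \<in> carrier_vec (2*D)" and x0: "x \<noteq> 0\<^sub>v (2*D)"
    and eq: "S *\<^sub>v x = \<omega> \<cdot>\<^sub>v (normM D *\<^sub>v x)"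
    unfolding rpa_solution_def by auto
  define y where "y = vec (2*D) (\<lambda>i. cnj (x $ swap_half D i))"
  have yc: "y \<in> carrier_vec (2*D)" unfolding y_def by simp
  have y: "sigmaX D *\<^sub>v cnj_vec x = y"
    unfolding sigmaX_mult_vec[OF carrier_vec_cnj_vec[OF x]] y_def
    using x swap_half_less by (intro eq_vecI) (auto simp: cnj_vec_def)
  have "S *\<^sub>v y = (- cnj \<omega>) \<cdot>\<^sub>v (normM D *\<^sub>v y)"
  proof (rule eq_vecI)
    fix i assume "i < dim_vec ((- cnj \<omega>) \<cdot>\<^sub>v (normM D *\<^sub>v y))"
    hence i: "i < 2*D" by (simp add: normM_mult_vec[OF yc])
    have Ny: "(normM D *\<^sub>v y) $ i = (if i < D then cnj (x $ swap_half D i) else - cnj (x $ swap_half D i))"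
      unfolding normM_mult_vec[OF yc] using i by (simp add: y_def)
    have Sx: "(S *\<^sub>v x) $ swap_half D i = \<omega> * (if i < D then - x $ swap_half D i else x $ swap_half D i)"
      unfolding eq normM_mult_vec[OF x]
      using swap_half_less[OF i] swap_half_less_half_iff[OF i] by simp
    have "(S *\<^sub>v y) $ i = (\<Sum>j\<in>{0..<2*D}. cnj (S $$ (swap_half D i, swap_half D j) * x $ swap_half D j))"
      using S i particle_hole_symmetric_entry[OF S sym i]
      by (auto simp: y_def scalar_prod_def row_def intro!: sum.cong)
    also have "\<dots> = cnj ((S *\<^sub>v x) $ swap_half D i)"
      unfolding sum_swap_half[of "\<lambda>j. cnj (S $$ (swap_half D i, j) * x $ j)"]
      using S x swap_half_less[OF i] by (simp add: scalar_prod_def row_def)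
    also have "\<dots> = ((- cnj \<omega>) \<cdot>\<^sub>v (normM D *\<^sub>v y)) $ i"
      using i yc by (simp add: Sx Ny)
    finally show "(S *\<^sub>v y) $ i = ((- cnj \<omega>) \<cdot>\<^sub>v (normM D *\<^sub>v y)) $ i" .
  qed (use S in \<open>simp add: normM_mult_vec[OF yc]\<close>)
  moreover have "y \<noteq> 0\<^sub>v (2*D)"
  proof
    assume "y = 0\<^sub>v (2*D)"
    then have "cnj_vec x = 0\<^sub>v (2*D)"
      using sigmaX_involutive[OF carrier_vec_cnj_vec[OF x]] y by simp
    with x0 show False by (simp add: cnj_vec_eq_conjugate)
  qed
  ultimately show ?thesis unfolding rpa_solution_def y using yc by simp
qed

lemma hermitian_qform_real:
  assumes "A \<in> carrier_mat n n" "dagger A = A" "x \<in> carrier_vec n"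
  shows "qform A x = complex_of_real (Re (qform A x))"
  using hermitian_sesquilinear_swap[OF assms(1,2) assms(3) assms(3)]
  unfolding qform_def by (simp add: complex_eq_iff)

lemma rpa_solution_qform:
  assumes "rpa_solution D S \<omega> x"
  shows "qform S x = \<omega> * qform (normM D) x"
  using assms unfolding rpa_solution_def qform_def by (simp add: cnj_vec_def)

lemma rpa_solution_Goldstone_mode:
  assumes S: "S \<in> carrier_mat (2*D) (2*D)" "dagger S = S" and psd: "psd_mat (2*D) S"
    and sol: "rpa_solution D S \<omega> x" and q0: "qform S x = 0"
  shows "\<omega> = 0 \<and> S *\<^sub>v x = 0\<^sub>v (2*D)"
proof -
  from sol have x: "x \<in> carrier_vec (2*D)" and x0: "x \<noteq> 0\<^sub>v (2*D)"
    and eq: "S *\<^sub>v x = \<omega> \<cdot>\<^sub>v (normM D *\<^sub>v x)"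
    unfolding rpa_solution_def by auto
  have Sx: "S *\<^sub>v x = 0\<^sub>v (2*D)" by (rule psd_qform_eq_0_imp_kernel[OF S psd x q0])
  have "\<omega> = 0"
  proof (rule ccontr)
    assume "\<omega> \<noteq> 0"
    then have "normM D *\<^sub>v x = inverse \<omega> \<cdot>\<^sub>v (S *\<^sub>v x)"
      unfolding eq by (simp add: smult_smult_assoc)
    with Sx x x0 show False by (simp add: normM_mult_vec_eq_0_iff)
  qed
  with Sx show ?thesis by simp
qed

lemma rpa_solution_physical:
  assumes psd: "psd_mat (2*D) S" and sol: "rpa_solution D S \<omega> x" and q0: "qform S x \<noteq> 0"
  shows "\<omega> \<in> \<real> \<and> \<omega> \<noteq> 0 \<and> qform (normM D) x \<noteq> 0
    \<and> (Re \<omega> > 0 \<longrightarrow> Re (qform (normM D) x) > 0)"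
proof -
  from sol have x: "x \<in> carrier_vec (2*D)" unfolding rpa_solution_def by auto
  define s where "s = Re (qform S x)"
  define u where "u = Re (qform (normM D) x)"
  have s: "qform S x = complex_of_real s" "s > 0"
    using psd_mat_qform_real_nonneg[OF psd x] q0 unfolding s_def by (auto simp: less_eq_real_def)
  have u: "qform (normM D) x = complex_of_real u"
    using hermitian_qform_real[OF normM_carrier normM_hermitian x] unfolding u_def .
  have su: "complex_of_real s = \<omega> * complex_of_real u"
    using rpa_solution_qform[OF sol] s(1) u by simp
  with s(2) have "u \<noteq> 0" by auto
  with su have \<omega>: "\<omega> = complex_of_real (s / u)" by (simp add: field_simps)
  show ?thesis
    using s(2) \<open>u \<noteq> 0\<close> unfolding \<omega> u by (auto simp: zero_less_divide_iff)
qed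

lemma mat_kernel_normM_mult_cube_subset_square:
  assumes S: "S \<in> carrier_mat (2*D) (2*D)" "dagger S = S" and psd: "psd_mat (2*D) S"
  shows "mat_kernel ((normM D * S) ^\<^sub>m 3) \<subseteq> mat_kernel ((normM D * S) ^\<^sub>m 2)"
proof
  let ?N = "normM D" and ?A = "normM D * S"
  have A: "?A \<in> carrier_mat (2*D) (2*D)" using mult_carrier_mat[OF normM_carrier S(1)] .
  have NA: "?N *\<^sub>v (?A *\<^sub>v w) = S *\<^sub>v w" if "w \<in> carrier_vec (2*D)" for w
    using that S normM_involutive[of "S *\<^sub>v w" D] by (simp add: assoc_mult_mat_vec[of _ "2*D" "2*D" _ "2*D"])
  fix v assume "v \<in> mat_kernel (?A ^\<^sub>m 3)"
  then have v: "v \<in> carrier_vec (2*D)" and cube: "?A *\<^sub>v (?A *\<^sub>v (?A *\<^sub>v v)) = 0\<^sub>v (2*D)"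
    using A by (auto simp: mat_kernel_def numeral_3_eq_3 pow_mat_Suc_mult_vec[OF A] simp del: pow_mat.simps(2))
  define x2 where "x2 = ?A *\<^sub>v v"
  define x1 where "x1 = ?A *\<^sub>v x2"
  have x2: "x2 \<in> carrier_vec (2*D)" and x1: "x1 \<in> carrier_vec (2*D)"
    unfolding x1_def x2_def using A v by auto
  have Sx1: "S *\<^sub>v x1 = 0\<^sub>v (2*D)"
    using NA[OF x1] cube unfolding x1_def x2_def by simp
  have Sx2: "S *\<^sub>v x2 = ?N *\<^sub>v x1" using NA[OF x2] unfolding x1_def by simp
  have Sv: "S *\<^sub>v v = ?N *\<^sub>v x2" using NA[OF v] unfolding x2_def by simp
  have "qform S x2 = cnj (cnj_vec x1 \<bullet> (?N *\<^sub>v x2))"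
    unfolding qform_def Sx2 hermitian_sesquilinear_swap[OF normM_carrier normM_hermitian x2 x1] ..
  also have "cnj_vec x1 \<bullet> (?N *\<^sub>v x2) = 0"
    using hermitian_sesquilinear_swap[OF S x1 v] Sx1 v unfolding Sv[symmetric] by simp
  finally have "S *\<^sub>v x2 = 0\<^sub>v (2*D)" using psd_qform_eq_0_imp_kernel[OF S psd x2] by simp
  then have "x1 = 0\<^sub>v (2*D)" using Sx2 normM_mult_vec_eq_0_iff[OF x1] by simp
  then show "v \<in> mat_kernel (?A ^\<^sub>m 2)"
    using A v unfolding x1_def x2_def
    by (auto simp: mat_kernel_def numeral_2_eq_2 pow_mat_Suc_mult_vec[OF A] simp del: pow_mat.simps(2))
qed

lemma char_matrix_0: "A \<in> carrier_mat n n \<Longrightarrow> char_matrix A 0 = A"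
  unfolding char_matrix_def by (rule eq_matI) auto

theorem proposition1:
  fixes D :: nat and S :: "complex mat"
  assumes "S \<in> carrier_mat (2*D) (2*D)"
    and "dagger S = S"
    and "sigmaX D * cnj_mat S * sigmaX D = S"
    and "psd_mat (2*D) S"
  shows "(\<forall>\<omega> x. rpa_solution D S \<omega> x \<longrightarrow>
           ((\<omega> \<in> \<real> \<and> \<omega> \<noteq> 0 \<and> (\<exists>y. rpa_solution D S (-\<omega>) y)
             \<and> qform (normM D) x \<noteq> 0
             \<and> (Re \<omega> > 0 \<longrightarrow> Re (qform (normM D) x) > 0))
           \<or> (\<omega> = 0 \<and> S *\<^sub>v x = 0\<^sub>v (2*D))))
     \<and> (\<forall>n_as. jordan_nf (normM D * S) n_as \<longrightarrow> (\<forall>(k, a) \<in> set n_as. a = 0 \<longrightarrow> k \<le> 2))"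
proof (intro conjI allI impI)
  fix \<omega> x assume sol: "rpa_solution D S \<omega> x"
  show "(\<omega> \<in> \<real> \<and> \<omega> \<noteq> 0 \<and> (\<exists>y. rpa_solution D S (-\<omega>) y)
      \<and> qform (normM D) x \<noteq> 0 \<and> (Re \<omega> > 0 \<longrightarrow> Re (qform (normM D) x) > 0))
    \<or> (\<omega> = 0 \<and> S *\<^sub>v x = 0\<^sub>v (2*D))"
  proof (cases "qform S x = 0")
    case True
    then show ?thesis using rpa_solution_Goldstone_mode[OF assms(1,2,4) sol] by simp
  next
    case False
    note physical = rpa_solution_physical[OF assms(4) sol False]
    then have "cnj \<omega> = \<omega>" by (simp add: Reals_cnj_iff)
    with rpa_solution_particle_hole_partner[OF assms(1,3) sol]
    have "\<exists>y. rpa_solution D S (-\<omega>) y" by auto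
    with physical show ?thesis by simp
  qed
next
  fix n_as assume jnf: "jordan_nf (normM D * S) n_as"
  have NS: "normM D * S \<in> carrier_mat (2*D) (2*D)" using mult_carrier_mat[OF normM_carrier assms(1)] .
  have "mat_kernel ((normM D * S) ^\<^sub>m Suc 2) \<subseteq> mat_kernel ((normM D * S) ^\<^sub>m 2)"
    using mat_kernel_normM_mult_cube_subset_square[OF assms(1,2,4)]
    by (simp only: numeral_3_eq_3 numeral_2_eq_2)
  then show "\<forall>(k, a) \<in> set n_as. a = 0 \<longrightarrow> k \<le> 2"
    by (rule jordan_nf_block_size_le_if_kernel_stable[OF NS jnf, of 0 2, unfolded char_matrix_0[OF NS]])
qed

end
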